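(* Let $N\ge1$, let $\mathcal{ZF}_N$ be as in the context, and let $\mathcal B_N$ be the quotient of the free $\Bbbk$-module on symbols $\bar b_0,\dots,\bar b_{N-1}$ by the submodule generated by $\bar b_i-\bar b_{N-1-i}$, $0\le i\le N-1$. Then the assignment $Z^{l,m,k}\mapsto\sum_{j=0}^k\binom kj\bar b_{l+j}$ extends to a well-defined isomorphism of $\Bbbk$-modules $\mathcal{ZF}_N\xrightarrow{\ \sim\ }\mathcal B_N$.
   Context: $\Bbbk$ is a commutative ring. $\mathcal F_N$ is the free $\Bbbk$-module on symbols $F^{l,m,k}$, $l,m,k\ge0$, $l+m+k+1=N$; $\mathcal{ZF}_N:=\mathcal F_N/I$ with $I$ generated by all $F^{l,m,k}-F^{m,l,k}$ and all $F^{l,m+1,k}+F^{l+1,m,k}-F^{l,m,k+1}$; $Z^{l,m,k}$ denotes the image of $F^{l,m,k}$. *)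

theory Defs
  imports Main "HOL-Library.Function_Algebras"
begin

text \<open>Free k-modules on a set of symbols are modelled as functions from symbols to k
  vanishing outside the symbol set; the basis vector of a symbol is delta.\<close>

definition delta :: "'a \<Rightarrow> ('a \<Rightarrow> 'k::comm_ring_1)" where
  "delta a = (\<lambda>x. if x = a then 1 else 0)"

definition fscale :: "'k::comm_ring_1 \<Rightarrow> ('a \<Rightarrow> 'k) \<Rightarrow> ('a \<Rightarrow> 'k)" where
  "fscale c f = (\<lambda>x. c * f x)"

definition gen_submod :: "('a \<Rightarrow> 'k::comm_ring_1) set \<Rightarrow> ('a \<Rightarrow> 'k) set" where
  "gen_submod S = {(\<Sum>a\<in>T. fscale (r a) a) | T r. finite T \<and> T \<subseteq> S}"

definition coset :: "'b::plus \<Rightarrow> 'b set \<Rightarrow> 'b set" where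
  "coset x A = (\<lambda>a. x + a) ` A"

definition idxF :: "nat \<Rightarrow> (nat \<times> nat \<times> nat) set" where
  "idxF N = {(l,m,k). l + m + k + 1 = N}"

definition freeF :: "nat \<Rightarrow> (nat \<times> nat \<times> nat \<Rightarrow> 'k::comm_ring_1) set" where
  "freeF N = {f. \<forall>t. t \<notin> idxF N \<longrightarrow> f t = 0}"

definition freeB :: "nat \<Rightarrow> (nat \<Rightarrow> 'k::comm_ring_1) set" where
  "freeB N = {g. \<forall>i. N \<le> i \<longrightarrow> g i = 0}"

definition relI :: "nat \<Rightarrow> (nat \<times> nat \<times> nat \<Rightarrow> 'k::comm_ring_1) set" where
  "relI N = gen_submod
     ({delta (l,m,k) - delta (m,l,k) | l m k. l + m + k + 1 = N} \<union>
      {delta (l,m+1,k) + delta (l+1,m,k) - delta (l,m,k+1) | l m k. l + (m+1) + k + 1 = N})"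

definition relJ :: "nat \<Rightarrow> (nat \<Rightarrow> 'k::comm_ring_1) set" where
  "relJ N = gen_submod {delta i - delta (N - 1 - i) | i. i \<le> N - 1}"

definition ZF :: "nat \<Rightarrow> (nat \<times> nat \<times> nat \<Rightarrow> 'k::comm_ring_1) set set" where
  "ZF N = (\<lambda>x. coset x (relI N)) ` freeF N"

definition BN :: "nat \<Rightarrow> (nat \<Rightarrow> 'k::comm_ring_1) set set" where
  "BN N = (\<lambda>x. coset x (relJ N)) ` freeB N"

definition phi_gen :: "nat \<times> nat \<times> nat \<Rightarrow> (nat \<Rightarrow> 'k::comm_ring_1)" where
  "phi_gen t = (case t of (l,m,k) \<Rightarrow> (\<Sum>j\<le>k. fscale (of_nat (k choose j)) (delta (l+j))))"

definition phi :: "nat \<Rightarrow> (nat \<times> nat \<times> nat \<Rightarrow> 'k::comm_ring_1) \<Rightarrow> (nat \<Rightarrow> 'k)" where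
  "phi N f = (\<Sum>t\<in>idxF N. fscale (f t) (phi_gen t))"

end

theory Submission
  imports Defs "HOL.Modules"
begin

(* phi respects the defining relations. As l + m + k = N - 1, the reflection i |-> N-1-i turns
   sum_j binom(k,j) b_{m+j} into sum_j binom(k,j) b_{l+k-j} = sum_j binom(k,j) b_{l+j}, so
   Z^{l,m,k} - Z^{m,l,k} is sent into the relations of B_N, while the relation
   Z^{l,m+1,k} + Z^{l+1,m,k} = Z^{l,m,k+1} is sent to Pascal's rule. Conversely psi, given by
   b_i |-> Z^{i,N-1-i,0}, respects the reflection thanks to the symmetry of Z in l and m.
   phi o psi is the identity, and iterating the Pascal relation gives
   Z^{l,m,k} = sum_j binom(k,j) Z^{l+j,N-1-l-j,0}, i.e. psi o phi is the identity on ZF_N. *)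

lemma sum_apply: "(\<Sum>a\<in>A. f a) x = (\<Sum>a\<in>A. f a x)"
  by (induction A rule: infinite_finite_induct) auto

lemma fscale_apply [simp]: "fscale c f x = c * f x"
  by (simp add: fscale_def)

lemma delta_apply: "delta a x = (if x = a then 1 else 0)"
  by (simp add: delta_def)

interpretation fun_module: module "fscale :: 'k::comm_ring_1 \<Rightarrow> ('a \<Rightarrow> 'k) \<Rightarrow> 'a \<Rightarrow> 'k"
  by standard (simp_all add: fun_eq_iff algebra_simps)

interpretation fun_module_pair:
  module_pair "fscale :: 'k::comm_ring_1 \<Rightarrow> ('a \<Rightarrow> 'k) \<Rightarrow> 'a \<Rightarrow> 'k"
    "fscale :: 'k \<Rightarrow> ('b \<Rightarrow> 'k) \<Rightarrow> 'b \<Rightarrow> 'k" ..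

lemma gen_submod_eq_span: "gen_submod S = fun_module.span S"
  by (simp add: gen_submod_def fun_module.span_explicit)

lemma (in module) coset_eq_iff:
  assumes "subspace M"
  shows "coset x M = coset y M \<longleftrightarrow> x - y \<in> M"
proof
  assume "coset x M = coset y M"
  then have "x + 0 \<in> coset y M"
    using subspace_0[OF assms] unfolding coset_def by blast
  then show "x - y \<in> M"
    unfolding coset_def by (auto simp: algebra_simps)
next
  assume "x - y \<in> M"
  then have "x + a \<in> coset y M" and "y + a \<in> coset x M" if "a \<in> M" for a
    using that subspace_add[OF assms] subspace_diff[OF assms] unfolding coset_def
    by (force intro: image_eqI[of _ _ "x - y + a"] image_eqI[of _ _ "a - (x - y)"])+
  then show "coset x M = coset y M"
    unfolding coset_def by blast
qed

definition induced_map :: "('a \<Rightarrow> 'b::plus) \<Rightarrow> 'b set \<Rightarrow> 'a set \<Rightarrow> 'b set" where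
  "induced_map f J C = coset (f (SOME x. x \<in> C)) J"

context module_pair
begin

lemma induced_map_coset:
  assumes f: "module_hom s1 s2 f" and I: "m1.subspace I" and J: "m2.subspace J"
    and "f ` I \<subseteq> J"
  shows "induced_map f J (coset x I) = coset (f x) J"
proof -
  have "x \<in> coset x I"
    using m1.subspace_0[OF I] unfolding coset_def by force
  then have "(SOME x'. x' \<in> coset x I) \<in> coset x I"
    by (rule someI)
  then obtain a where "a \<in> I" and "(SOME x'. x' \<in> coset x I) = x + a"
    unfolding coset_def by blast
  moreover have "f (x + a) - f x = f a"
    using module_hom.add[OF f] by simp
  ultimately show ?thesis
    unfolding induced_map_def using m2.coset_eq_iff[OF J] \<open>f ` I \<subseteq> J\<close> by auto
qed

lemma bij_betw_induced_map:
  assumes f: "module_hom s1 s2 f" and g: "module_hom s2 s1 g"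
    and I: "m1.subspace I" and J: "m2.subspace J"
    and "f ` I \<subseteq> J" "g ` J \<subseteq> I" "f ` A \<subseteq> B" "g ` B \<subseteq> A"
    and gf: "\<And>x. x \<in> A \<Longrightarrow> g (f x) - x \<in> I"
    and fg: "\<And>y. y \<in> B \<Longrightarrow> f (g y) - y \<in> J"
  shows "bij_betw (induced_map f J) ((\<lambda>x. coset x I) ` A) ((\<lambda>y. coset y J) ` B)"
proof -
  note f_coset = induced_map_coset[OF f I J \<open>f ` I \<subseteq> J\<close>]
  have inj: "coset x I = coset y I"
    if "x \<in> A" "y \<in> A" "coset (f x) J = coset (f y) J" for x y
  proof -
    have "g (f x - f y) \<in> I"
      using that(3) m2.coset_eq_iff[OF J] \<open>g ` J \<subseteq> I\<close> by blast
    moreover have "(g (f x) - x) - (g (f y) - y) \<in> I"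
      by (rule m1.subspace_diff[OF I gf[OF that(1)] gf[OF that(2)]])
    ultimately have "g (f x - f y) - ((g (f x) - x) - (g (f y) - y)) \<in> I"
      by (rule m1.subspace_diff[OF I])
    moreover have "g (f x - f y) - ((g (f x) - x) - (g (f y) - y)) = x - y"
      by (simp add: module_hom.diff[OF g])
    ultimately show ?thesis
      using m1.coset_eq_iff[OF I] by simp
  qed
  have surj: "induced_map f J (coset (g y) I) = coset y J" if "y \<in> B" for y
    using f_coset fg[OF that] m2.coset_eq_iff[OF J] by simp
  show ?thesis
    unfolding bij_betw_def
  proof (intro conjI inj_onI)
    show "induced_map f J ` (\<lambda>x. coset x I) ` A = (\<lambda>y. coset y J) ` B"
    proof (intro equalityI subsetI)
      fix C assume "C \<in> induced_map f J ` (\<lambda>x. coset x I) ` A"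
      then show "C \<in> (\<lambda>y. coset y J) ` B"
        using f_coset \<open>f ` A \<subseteq> B\<close> by auto
    next
      fix C assume "C \<in> (\<lambda>y. coset y J) ` B"
      then obtain y where "y \<in> B" "C = coset y J" by blast
      then show "C \<in> induced_map f J ` (\<lambda>x. coset x I) ` A"
        using surj[symmetric] \<open>g ` B \<subseteq> A\<close> by (intro image_eqI[of _ _ "coset (g y) I"]) auto
    qed
  next
    fix C1 C2 assume "C1 \<in> (\<lambda>x. coset x I) ` A" "C2 \<in> (\<lambda>x. coset x I) ` A"
      and eq: "induced_map f J C1 = induced_map f J C2"
    then obtain x y where "x \<in> A" "y \<in> A" "C1 = coset x I" "C2 = coset y I"
      by blast
    with eq show "C1 = C2"
      using f_coset inj by metis
  qed
qed

end

definition extend_linear :: "'a set \<Rightarrow> ('a \<Rightarrow> 'b \<Rightarrow> 'k::comm_ring_1) \<Rightarrow> ('a \<Rightarrow> 'k) \<Rightarrow> 'b \<Rightarrow> 'k" where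
  "extend_linear A G f = (\<Sum>t\<in>A. fscale (f t) (G t))"

lemma extend_linear_apply: "extend_linear A G f x = (\<Sum>t\<in>A. f t * G t x)"
  by (simp add: extend_linear_def sum_apply)

lemma module_hom_extend_linear: "module_hom fscale fscale (extend_linear A G)"
  by (simp add: module_hom_iff fun_module.module_axioms extend_linear_apply fun_eq_iff
      distrib_right sum.distrib sum_distrib_left mult.assoc)

lemma extend_linear_delta:
  "finite A \<Longrightarrow> extend_linear A G (delta s) = (if s \<in> A then G s else 0)"
  by (simp add: fun_eq_iff extend_linear_apply delta_apply if_distrib[of "\<lambda>c. c * _"] sum.delta
      cong: if_cong)

lemma (in module_hom) image_span_subset:
  assumes "f ` S \<subseteq> T" "m2.subspace T"
  shows "f ` m1.span S \<subseteq> T"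
  using span_image m2.span_minimal[OF assms] by simp

definition binom_row :: "nat \<Rightarrow> nat \<Rightarrow> nat \<Rightarrow> 'k::comm_ring_1" where
  "binom_row l k i = (if l \<le> i then of_nat (k choose (i - l)) else 0)"

lemma binom_row_eq_sum: "binom_row l k = (\<Sum>j\<le>k. fscale (of_nat (k choose j)) (delta (l + j)))"
proof (rule ext)
  fix i
  have "(\<Sum>j\<le>k. fscale (of_nat (k choose j)) (delta (l + j)) i)
      = (\<Sum>j\<le>k. if j = i - l then (if l \<le> i then of_nat (k choose j) else 0) else 0)"
    by (rule sum.cong) (auto simp: delta_apply)
  also have "\<dots> = binom_row l k i"
    by (auto simp: binom_row_def binomial_eq_0)
  finally show "binom_row l k i = (\<Sum>j\<le>k. fscale (of_nat (k choose j)) (delta (l + j))) i"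
    unfolding sum_apply by (rule sym)
qed

lemma binom_row_eq_sum_reflected:
  "binom_row l k = (\<Sum>j\<le>k. fscale (of_nat (k choose j)) (delta (l + (k - j))))"
proof -
  have "(\<Sum>j\<le>k. fscale (of_nat (k choose j)) (delta (l + (k - j))))
      = (\<Sum>j\<le>k. fscale (of_nat (k choose (k - j))) (delta (l + j)) :: nat \<Rightarrow> 'a)"
    by (rule sum.reindex_bij_witness[of _ "\<lambda>j. k - j" "\<lambda>j. k - j"])
      (auto simp: binomial_symmetric[symmetric])
  also have "\<dots> = binom_row l k"
    by (simp add: binom_row_eq_sum binomial_symmetric[symmetric])
  finally show ?thesis ..
qed

lemma binom_row_0: "binom_row l 0 = delta l"
  by (auto simp: fun_eq_iff binom_row_def delta_apply binomial_eq_0)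

lemma binom_row_Suc: "binom_row l (Suc k) = binom_row l k + binom_row (Suc l) k"
proof (rule ext)
  fix i
  show "binom_row l (Suc k) i = (binom_row l k + binom_row (Suc l) k) i"
  proof (cases "i \<le> l")
    case True
    then show ?thesis by (cases "i = l") (auto simp: binom_row_def)
  next
    case False
    then have "i - l = Suc (i - Suc l)" by simp
    with False show ?thesis by (simp add: binom_row_def)
  qed
qed

lemma finite_idxF: "finite (idxF N)"
proof -
  have "idxF N \<subseteq> {..<N} \<times> {..<N} \<times> {..<N}"
    unfolding idxF_def by auto
  then show ?thesis
    by (rule finite_subset) auto
qed

lemma mem_idxF [simp]: "(l, m, k) \<in> idxF N \<longleftrightarrow> l + m + k + 1 = N"
  by (simp add: idxF_def)

lemma phi_gen_eq_binom_row: "phi_gen (l, m, k) = binom_row l k"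
  by (simp add: phi_gen_def binom_row_eq_sum)

lemma phi_eq_extend_linear: "phi N = extend_linear (idxF N) phi_gen"
  by (simp add: fun_eq_iff phi_def extend_linear_def)

lemma module_hom_phi: "module_hom fscale fscale (phi N)"
  unfolding phi_eq_extend_linear by (rule module_hom_extend_linear)

lemma phi_delta: "l + m + k + 1 = N \<Longrightarrow> phi N (delta (l, m, k)) = binom_row l k"
  by (simp add: phi_eq_extend_linear extend_linear_delta finite_idxF phi_gen_eq_binom_row)

lemma subspace_relI: "fun_module.subspace (relI N)"
  by (simp add: relI_def gen_submod_eq_span)

lemma subspace_relJ: "fun_module.subspace (relJ N)"
  by (simp add: relJ_def gen_submod_eq_span)

lemma binom_row_reflection_in_relJ:
  assumes "l + m + k + 1 = N"
  shows "binom_row m k - binom_row l k \<in> (relJ N :: (nat \<Rightarrow> 'k::comm_ring_1) set)"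
proof -
  have "binom_row m k - binom_row l k
      = (\<Sum>j\<le>k. fscale (of_nat (k choose j)) (delta (m + j) - delta (N - 1 - (m + j))) :: nat \<Rightarrow> 'k)"
    unfolding binom_row_eq_sum[of m] binom_row_eq_sum_reflected[of l]
    using assms by (auto simp: fun_eq_iff sum_apply sum_subtractf[symmetric] right_diff_distrib
        intro!: sum.cong)
  also have "\<dots> \<in> relJ N"
    unfolding relJ_def gen_submod_eq_span
    using assms by (intro fun_module.span_sum fun_module.span_scale fun_module.span_base) auto
  finally show ?thesis .
qed

lemma phi_relI_subset: "phi N ` relI N \<subseteq> (relJ N :: (nat \<Rightarrow> 'k::comm_ring_1) set)"
  unfolding relI_def gen_submod_eq_span
proof (intro module_hom.image_span_subset[OF module_hom_phi] subspace_relJ image_subsetI)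
  fix s :: "nat \<times> nat \<times> nat \<Rightarrow> 'k"
  assume "s \<in> {delta (l, m, k) - delta (m, l, k) | l m k. l + m + k + 1 = N} \<union>
      {delta (l, m + 1, k) + delta (l + 1, m, k) - delta (l, m, k + 1) | l m k.
        l + (m + 1) + k + 1 = N}"
  then consider l m k where "l + m + k + 1 = N" "s = delta (l, m, k) - delta (m, l, k)"
    | l m k where "l + (m + 1) + k + 1 = N"
        "s = delta (l, m + 1, k) + delta (l + 1, m, k) - delta (l, m, k + 1)"
    by blast
  then show "phi N s \<in> relJ N"
  proof cases
    case 1
    then have "phi N s = - (binom_row m k - binom_row l k)"
      by (simp add: module_hom.diff[OF module_hom_phi] phi_delta)
    also have "\<dots> \<in> relJ N"
      using 1 by (intro fun_module.subspace_neg subspace_relJ binom_row_reflection_in_relJ) simp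
    finally show ?thesis .
  next
    case 2
    then have "phi N s = 0"
      by (simp add: module_hom.diff[OF module_hom_phi] module_hom.add[OF module_hom_phi] phi_delta
          binom_row_Suc)
    then show ?thesis
      using fun_module.subspace_0[OF subspace_relJ] by simp
  qed
qed

definition psi :: "nat \<Rightarrow> (nat \<Rightarrow> 'k::comm_ring_1) \<Rightarrow> nat \<times> nat \<times> nat \<Rightarrow> 'k" where
  "psi N = extend_linear {..<N} (\<lambda>i. delta (i, N - 1 - i, 0))"

lemma module_hom_psi: "module_hom fscale fscale (psi N)"
  unfolding psi_def by (rule module_hom_extend_linear)

lemma psi_delta: "i < N \<Longrightarrow> psi N (delta i) = delta (i, N - 1 - i, 0)"
  by (simp add: psi_def extend_linear_delta)

lemma psi_relJ_subset:
  assumes "1 \<le> N"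
  shows "psi N ` relJ N \<subseteq> (relI N :: (nat \<times> nat \<times> nat \<Rightarrow> 'k::comm_ring_1) set)"
  unfolding relJ_def gen_submod_eq_span
proof (intro module_hom.image_span_subset[OF module_hom_psi] subspace_relI image_subsetI)
  fix s :: "nat \<Rightarrow> 'k"
  assume "s \<in> {delta i - delta (N - 1 - i) | i. i \<le> N - 1}"
  then obtain i where i: "i \<le> N - 1" "s = delta i - delta (N - 1 - i)"
    by blast
  with assms have "psi N s = delta (i, N - 1 - i, 0) - delta (N - 1 - i, i, 0)"
    by (simp add: module_hom.diff[OF module_hom_psi] psi_delta)
  also have "\<dots> \<in> relI N"
    unfolding relI_def gen_submod_eq_span using i assms
    by (intro fun_module.span_base UnI1 CollectI exI[of _ i] exI[of _ "N - 1 - i"] exI[of _ 0])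
      auto
  finally show "psi N s \<in> relI N" .
qed

lemma phi_in_freeB: "phi N x \<in> (freeB N :: (nat \<Rightarrow> 'k::comm_ring_1) set)"
proof -
  have "phi N x i = 0" if "N \<le> i" for i
  proof -
    have vanish: "phi_gen t i = 0" if "t \<in> idxF N" for t
      using that \<open>N \<le> i\<close> by (auto simp: idxF_def phi_gen_eq_binom_row binom_row_def binomial_eq_0)
    show ?thesis
      unfolding phi_def sum_apply fscale_apply by (rule sum.neutral) (simp add: vanish)
  qed
  then show "phi N x \<in> freeB N"
    by (simp add: freeB_def)
qed

lemma psi_in_freeF: "psi N g \<in> (freeF N :: (nat \<times> nat \<times> nat \<Rightarrow> 'k::comm_ring_1) set)"
proof -
  have "psi N g t = 0" if "t \<notin> idxF N" for t
    using that by (auto simp: psi_def extend_linear_apply delta_apply intro!: sum.neutral)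
  then show "psi N g \<in> freeF N"
    by (simp add: freeF_def)
qed

lemma phi_psi:
  assumes "g \<in> freeB N"
  shows "phi N (psi N g) = (g :: nat \<Rightarrow> 'k::comm_ring_1)"
proof -
  have "phi N (psi N g) = (\<Sum>i<N. fscale (g i) (delta i))"
    unfolding psi_def extend_linear_def module_hom.sum[OF module_hom_phi]
      module_hom.scale[OF module_hom_phi]
    by (simp add: phi_delta binom_row_0)
  also have "\<dots> = g"
    using assms by (auto simp: fun_eq_iff sum_apply delta_apply freeB_def if_distrib[of "\<lambda>c. _ * c"]
        cong: if_cong)
  finally show ?thesis .
qed

lemma psi_binom_row:
  assumes "l + m + k + 1 = N"
  shows "psi N (binom_row l k) - delta (l, m, k)
    \<in> (relI N :: (nat \<times> nat \<times> nat \<Rightarrow> 'k::comm_ring_1) set)"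
  using assms
proof (induction k arbitrary: l m)
  case 0
  then have "psi N (binom_row l 0) = (delta (l, m, 0) :: nat \<times> nat \<times> nat \<Rightarrow> 'k)"
    by (auto simp: binom_row_0 psi_delta)
  then show ?case
    using fun_module.subspace_0[OF subspace_relI] by (simp only: diff_self)
next
  case (Suc k)
  have IH: "psi N (binom_row l k) - delta (l, m + 1, k) \<in> (relI N :: (nat \<times> nat \<times> nat \<Rightarrow> 'k) set)"
    "psi N (binom_row (Suc l) k) - delta (Suc l, m, k) \<in> (relI N :: (nat \<times> nat \<times> nat \<Rightarrow> 'k) set)"
    using Suc.prems by (intro Suc.IH; simp)+
  have pascal: "delta (l, m + 1, k) + delta (Suc l, m, k) - delta (l, m, Suc k)
      \<in> (relI N :: (nat \<times> nat \<times> nat \<Rightarrow> 'k) set)"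
    unfolding relI_def gen_submod_eq_span using Suc.prems
    by (intro fun_module.span_base UnI2 CollectI exI[of _ l] exI[of _ m] exI[of _ k]) auto
  have "psi N (binom_row l (Suc k)) - (delta (l, m, Suc k) :: nat \<times> nat \<times> nat \<Rightarrow> 'k)
      = (psi N (binom_row l k) - delta (l, m + 1, k))
        + (psi N (binom_row (Suc l) k) - delta (Suc l, m, k))
        + (delta (l, m + 1, k) + delta (Suc l, m, k) - delta (l, m, Suc k))"
    by (simp add: binom_row_Suc module_hom.add[OF module_hom_psi])
  also have "\<dots> \<in> relI N"
    using IH pascal by (intro fun_module.subspace_add subspace_relI)
  finally show ?case .
qed

lemma psi_phi:
  assumes "x \<in> freeF N"
  shows "psi N (phi N x) - x \<in> (relI N :: (nat \<times> nat \<times> nat \<Rightarrow> 'k::comm_ring_1) set)"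
proof -
  have expansion: "(\<Sum>t\<in>idxF N. fscale (x t) (delta t)) = x"
    using assms by (auto simp: fun_eq_iff freeF_def sum_apply delta_apply finite_idxF
        if_distrib[of "\<lambda>c. _ * c"] cong: if_cong)
  have "psi N (phi N x) = (\<Sum>t\<in>idxF N. fscale (x t) (psi N (phi_gen t)))"
    unfolding phi_def
    by (simp add: module_hom.sum[OF module_hom_psi] module_hom.scale[OF module_hom_psi])
  then have "psi N (phi N x) - x
      = (\<Sum>t\<in>idxF N. fscale (x t) (psi N (phi_gen t))) - (\<Sum>t\<in>idxF N. fscale (x t) (delta t))"
    by (simp only: expansion)
  also have "\<dots> = (\<Sum>t\<in>idxF N. fscale (x t) (psi N (phi_gen t) - delta t))"
    by (simp only: sum_subtractf[symmetric] fun_module.scale_right_diff_distrib)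
  also have "\<dots> \<in> relI N"
  proof (intro fun_module.subspace_sum fun_module.subspace_scale subspace_relI)
    fix t assume "t \<in> idxF N"
    then obtain l m k where "t = (l, m, k)" and lmk: "l + m + k + 1 = N"
      unfolding idxF_def by auto
    then show "psi N (phi_gen t) - delta t \<in> (relI N :: (nat \<times> nat \<times> nat \<Rightarrow> 'k) set)"
      using psi_binom_row[OF lmk] by (simp add: phi_gen_eq_binom_row)
  qed
  finally show ?thesis .
qed

theorem mainTheorem4:
  fixes N :: nat
  assumes "1 \<le> N"
  shows "\<exists>\<Phi>. (\<forall>x\<in>freeF N. \<Phi> (coset x (relI N)) = coset (phi N x) (relJ N))
            \<and> bij_betw \<Phi> (ZF N :: (nat \<times> nat \<times> nat \<Rightarrow> 'k::comm_ring_1) set set) (BN N)"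
proof -
  have "induced_map (phi N) (relJ N) (coset x (relI N)) = coset (phi N x) (relJ N)"
    for x :: "nat \<times> nat \<times> nat \<Rightarrow> 'k"
    by (rule fun_module_pair.induced_map_coset[OF module_hom_phi subspace_relI subspace_relJ
          phi_relI_subset])
  moreover have "bij_betw (induced_map (phi N) (relJ N))
      (ZF N :: (nat \<times> nat \<times> nat \<Rightarrow> 'k) set set) (BN N)"
    unfolding ZF_def BN_def
  proof (rule fun_module_pair.bij_betw_induced_map[OF module_hom_phi module_hom_psi
        subspace_relI subspace_relJ phi_relI_subset psi_relJ_subset[OF assms]])
    show "phi N ` freeF N \<subseteq> freeB N" "psi N ` freeB N \<subseteq> freeF N"
      using phi_in_freeB psi_in_freeF by blast+
    show "psi N (phi N x) - x \<in> relI N" if "x \<in> freeF N" for x :: "nat \<times> nat \<times> nat \<Rightarrow> 'k"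
      using that by (rule psi_phi)
    show "phi N (psi N g) - g \<in> relJ N" if "g \<in> freeB N" for g :: "nat \<Rightarrow> 'k"
      using phi_psi[OF that] fun_module.subspace_0[OF subspace_relJ] by (simp only: diff_self)
  qed
  ultimately show ?thesis
    by blast
qed

end
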